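(* Let $(M,d)$ be a compact metric space, $S$ a semitopological semigroup which is left reversible or left amenable, and $\{T_s:s\in S\}$ a representation of $S$ on $M$ such that $S\times M\ni(s,x)\mapsto T_sx$ is jointly continuous and $\mathcal S=\{T_s:s\in S\}$ is (as a semigroup under composition) generated by uniformly asymptotically regular mappings. Let $\bar{\mathcal S}$ be the closure of $\mathcal S$ in $M^M$ with respect to the topology of pointwise convergence. Then there exists $r\in\bar{\mathcal S}$ with $r\circ r=r$ and $r(M)=\mathrm{Fix}\,\mathcal S$.
   Context: Uniformly asymptotically regular: $\lim_n\sup_{x\in M}d(T^{n+1}x,T^nx)=0$. Semitopological semigroup: Hausdorff topology making $s\mapsto ts$, $s\mapsto st$ continuous. Representation: $T_{st}=T_s\circ T_t$. Left reversible: any two closed right ideals (sets $I$ with $IS\subset I$) intersect. Left amenable: there is $\mu\in LUC(S)^*$ with $\|\mu\|=\mu(1)=1$, $\mu(l_sf)=\mu(f)$, where $(l_sf)(t)=f(st)$ and $LUC(S)$ consists of bounded continuous $f$ with $s\mapsto l_sf$ sup-norm continuous. $\mathrm{Fix}\,\mathcal S$ is the set of common fixed points. *)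

theory Defs
  imports "HOL-Analysis.Analysis"
begin

definition semitopological_semigroup :: "('s::{t2_space,semigroup_mult}) itself \<Rightarrow> bool" where
  "semitopological_semigroup _ \<longleftrightarrow>
     (\<forall>t::'s. continuous_on UNIV (\<lambda>s. t * s) \<and> continuous_on UNIV (\<lambda>s. s * t))"

definition right_ideal :: "('s::semigroup_mult) set \<Rightarrow> bool" where
  "right_ideal I \<longleftrightarrow> I \<noteq> {} \<and> (\<forall>a\<in>I. \<forall>s. a * s \<in> I)"

definition left_reversible :: "('s::{topological_space,semigroup_mult}) itself \<Rightarrow> bool" where
  "left_reversible _ \<longleftrightarrow>
     (\<forall>I J :: 's set. closed I \<and> right_ideal I \<and> closed J \<and> right_ideal J \<longrightarrow> I \<inter> J \<noteq> {})"

definition ltrans :: "'s::semigroup_mult \<Rightarrow> ('s \<Rightarrow> real) \<Rightarrow> ('s \<Rightarrow> real)" where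
  "ltrans s f = (\<lambda>t. f (s * t))"

text \<open>LUC(S): bounded continuous real functions f such that s \<mapsto> l_s f is
  continuous into the sup-norm space of bounded functions.\<close>
definition LUC :: "('s::{topological_space,semigroup_mult} \<Rightarrow> real) set" where
  "LUC = {f. bounded (range f) \<and> continuous_on UNIV f \<and>
           (\<forall>s0. \<forall>e>0. \<exists>U. open U \<and> s0 \<in> U \<and>
               (\<forall>s\<in>U. \<forall>t. \<bar>ltrans s f t - ltrans s0 f t\<bar> < e))}"

definition left_amenable :: "('s::{topological_space,semigroup_mult}) itself \<Rightarrow> bool" where
  "left_amenable _ \<longleftrightarrow>
     (\<exists>\<mu> :: ('s \<Rightarrow> real) \<Rightarrow> real.
        (\<forall>f\<in>LUC. \<forall>g\<in>LUC. \<mu> (\<lambda>t. f t + g t) = \<mu> f + \<mu> g) \<and>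
        (\<forall>f\<in>LUC. \<forall>c. \<mu> (\<lambda>t. c * f t) = c * \<mu> f) \<and>
        (\<forall>f\<in>LUC. \<bar>\<mu> f\<bar> \<le> (SUP t. \<bar>f t\<bar>)) \<and>
        \<mu> (\<lambda>_. 1) = 1 \<and>
        (\<forall>f\<in>LUC. \<forall>s. \<mu> (ltrans s f) = \<mu> f))"

definition unif_asymp_regular :: "('m::metric_space \<Rightarrow> 'm) \<Rightarrow> bool" where
  "unif_asymp_regular f \<longleftrightarrow>
     (\<forall>n. bdd_above (range (\<lambda>x. dist ((f ^^ Suc n) x) ((f ^^ n) x)))) \<and>
     (\<lambda>n. SUP x. dist ((f ^^ Suc n) x) ((f ^^ n) x)) \<longlonglongrightarrow> 0"

inductive_set gen_semigroup :: "('a \<Rightarrow> 'a) set \<Rightarrow> ('a \<Rightarrow> 'a) set" for G where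
  base: "g \<in> G \<Longrightarrow> g \<in> gen_semigroup G"
| comp: "f \<in> gen_semigroup G \<Longrightarrow> g \<in> gen_semigroup G \<Longrightarrow> f \<circ> g \<in> gen_semigroup G"

end

theory Submission
  imports Defs
begin

text \<open>Each uniformly asymptotically regular generator \<open>g\<close> almost fixes every point in the range
  of a high iterate \<open>g\<^sup>n\<close>, and \<open>g\<^sup>n\<close> belongs to the semigroup. Left reversibility (the closed
  right ideals of such almost absorbing elements meet) or a left invariant mean (averaging the
  defects \<open>t \<mapsto> d(g T\<^sub>t x, T\<^sub>t x)\<close>) turns this into a finite intersection property: for finitely
  many generators and points and every \<open>\<epsilon> > 0\<close> some \<open>T\<^sub>t\<close> is \<open>\<epsilon>\<close>-almost fixed by all of them.
  Since \<open>M\<^sup>M\<close> is compact, some \<open>r\<close> in the pointwise closure of the semigroup maps \<open>M\<close> into the common fixed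
  points of the generators, i.e. into \<open>Fix S\<close>; and \<open>r\<close> fixes \<open>Fix S\<close> pointwise, being a pointwise
  limit of maps that do.\<close>

section \<open>Pointwise closures of families of self-maps\<close>

lemma continuous_on_UNIV_compose:
  "continuous_on UNIV f \<Longrightarrow> continuous_on UNIV g \<Longrightarrow> continuous_on UNIV (\<lambda>x. f (g x))"
  by (rule continuous_on_compose2) auto

lemma jointly_continuous_sections:
  assumes "continuous_on UNIV (\<lambda>(s, x). T s x)"
  shows "continuous_on UNIV (T s)" and "continuous_on UNIV (\<lambda>t. T t x)"
proof -
  have "continuous_on UNIV (\<lambda>y. (\<lambda>(s, x). T s x) (s, y))"
    by (rule continuous_on_UNIV_compose[OF assms]) (intro continuous_intros)
  then show "continuous_on UNIV (T s)" by simp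
  have "continuous_on UNIV (\<lambda>t. (\<lambda>(s, x). T s x) (t, x))"
    by (rule continuous_on_UNIV_compose[OF assms]) (intro continuous_intros)
  then show "continuous_on UNIV (\<lambda>t. T t x)" by simp
qed

lemma compact_UNIV_fun:
  assumes "compact (UNIV :: 'b::topological_space set)"
  shows "compact (UNIV :: ('a \<Rightarrow> 'b) set)"
proof -
  have "compact_space (euclidean :: 'b topology)"
    using assms by (simp add: compact_space_def)
  then have "compact_space (product_topology (\<lambda>_::'a. euclidean :: 'b topology) UNIV)"
    by (simp add: compact_space_product_topology)
  then show ?thesis by (simp add: euclidean_product_topology compact_space_def)
qed

lemma common_fixed_point_in_closure:
  fixes F A :: "('m::metric_space \<Rightarrow> 'm) set"
  assumes compact: "compact (UNIV :: 'm set)"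
    and cont: "\<And>g. g \<in> A \<Longrightarrow> continuous_on UNIV g"
    and almost_fixed: "\<And>P \<epsilon>. finite P \<Longrightarrow> P \<subseteq> A \<times> UNIV \<Longrightarrow> \<epsilon> > 0 \<Longrightarrow>
                         \<exists>f\<in>F. \<forall>(g, x)\<in>P. dist (g (f x)) (f x) \<le> \<epsilon>"
  obtains r where "r \<in> closure F" and "\<And>g x. g \<in> A \<Longrightarrow> g (r x) = r x"
proof -
  define C where "C = (\<lambda>(g, x, \<epsilon>). {p :: 'm \<Rightarrow> 'm. dist (g (p x)) (p x) \<le> \<epsilon>})"
  define I where "I = A \<times> (UNIV :: 'm set) \<times> {0 :: real <..}"
  have "closure F \<inter> (\<Inter>i\<in>I. C i) \<noteq> {}"
  proof (rule compact_imp_fip_image)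
    show "compact (closure F)"
      using compact_Int_closed[OF compact_UNIV_fun[OF compact] closed_closure] by simp
    show "closed (C i)" if i_in: "i \<in> I" for i
    proof -
      obtain g x \<epsilon> where i: "i = (g, x, \<epsilon>)" and "g \<in> A"
        using i_in by (cases i) (auto simp: I_def)
      have px: "continuous_on UNIV (\<lambda>p::'m \<Rightarrow> 'm. p x)" by simp
      have gpx: "continuous_on UNIV (\<lambda>p::'m \<Rightarrow> 'm. g (p x))"
        by (rule continuous_on_UNIV_compose[OF cont[OF \<open>g \<in> A\<close>] px])
      show ?thesis unfolding C_def i prod.case
        by (intro closed_Collect_le continuous_on_dist continuous_on_const gpx px)
    qed
  next
    fix J assume J: "finite J" "J \<subseteq> I"
    \<comment> \<open>\<open>insert 1\<close> keeps the minimum positive for \<open>J = {}\<close>\<close>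
    define \<epsilon> where "\<epsilon> = Min (insert 1 ((\<lambda>(g, x, \<epsilon>). \<epsilon>) ` J))"
    have "\<epsilon> > 0" unfolding \<epsilon>_def using J by (subst Min_gr_iff) (auto simp: I_def)
    have "(\<lambda>(g, x, _). (g, x)) ` J \<subseteq> A \<times> UNIV" using J by (auto simp: I_def)
    then obtain f where "f \<in> F"
      and f: "\<forall>(g, x)\<in>(\<lambda>(g, x, _). (g, x)) ` J. dist (g (f x)) (f x) \<le> \<epsilon>"
      using almost_fixed[OF finite_imageI[OF J(1)] _ \<open>\<epsilon> > 0\<close>] by blast
    have "f \<in> C i" if "i \<in> J" for i
    proof -
      obtain g x \<delta> where i: "i = (g, x, \<delta>)" by (cases i)
      have "\<delta> \<in> insert 1 ((\<lambda>(g, x, \<epsilon>). \<epsilon>) ` J)" using that i by force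
      then have "\<epsilon> \<le> \<delta>" unfolding \<epsilon>_def using J(1) by (intro Min_le) auto
      moreover have "dist (g (f x)) (f x) \<le> \<epsilon>" using f that i by force
      ultimately show ?thesis by (simp add: C_def i)
    qed
    then show "closure F \<inter> (\<Inter>i\<in>J. C i) \<noteq> {}" using \<open>f \<in> F\<close> closure_subset by blast
  qed
  then obtain r where "r \<in> closure F" and r: "\<And>i. i \<in> I \<Longrightarrow> r \<in> C i" by blast
  moreover have "g (r x) = r x" if "g \<in> A" for g x
  proof (rule ccontr)
    assume "g (r x) \<noteq> r x"
    then have "r \<notin> C (g, x, dist (g (r x)) (r x) / 2)" by (simp add: C_def)
    with \<open>g (r x) \<noteq> r x\<close> show False using r that by (simp add: I_def)
  qed
  ultimately show ?thesis using that by blast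
qed

lemma retraction_onto_common_fixed_points:
  fixes F :: "('a::t2_space \<Rightarrow> 'a) set"
  assumes "r \<in> closure F" and "\<And>f x. f \<in> F \<Longrightarrow> f (r x) = r x"
  shows "r \<circ> r = r" and "range r = {x. \<forall>f\<in>F. f x = x}"
proof -
  have r_fixes: "r x = x" if "\<forall>f\<in>F. f x = x" for x
  proof -
    have "F \<subseteq> {p. p x = x}" using that by auto
    then have "closure F \<subseteq> {p. p x = x}"
      by (rule closure_minimal) (simp add: closed_Collect_eq)
    then show ?thesis using assms(1) by blast
  qed
  then show "r \<circ> r = r" using assms(2) by (auto simp: fun_eq_iff)
  show "range r = {x. \<forall>f\<in>F. f x = x}"
    using assms(2) r_fixes by (auto intro: range_eqI[OF sym])
qed

section \<open>Generators and uniform asymptotic regularity\<close>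

lemma gen_semigroup_common_fixed_point:
  "f \<in> gen_semigroup G \<Longrightarrow> (\<And>g. g \<in> G \<Longrightarrow> g y = y) \<Longrightarrow> f y = y"
  by (induction rule: gen_semigroup.induct) auto

lemma funpow_Suc_in_gen_semigroup:
  "g \<in> gen_semigroup G \<Longrightarrow> g ^^ Suc n \<in> gen_semigroup G"
  by (induction n) (simp_all add: gen_semigroup.comp)

lemma unif_asymp_regular_eventually_almost_fixed:
  assumes "unif_asymp_regular g" and "\<epsilon> > 0"
  shows "\<forall>\<^sub>F n in sequentially. \<forall>y. dist (g ((g ^^ n) y)) ((g ^^ n) y) \<le> \<epsilon>"
proof -
  have bdd: "\<And>n. bdd_above (range (\<lambda>x. dist ((g ^^ Suc n) x) ((g ^^ n) x)))"
    and lim: "(\<lambda>n. SUP x. dist ((g ^^ Suc n) x) ((g ^^ n) x)) \<longlonglongrightarrow> 0"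
    using assms(1) unfolding unif_asymp_regular_def by auto
  have "\<forall>\<^sub>F n in sequentially. (SUP x. dist ((g ^^ Suc n) x) ((g ^^ n) x)) < \<epsilon>"
    using order_tendstoD(2)[OF lim assms(2)] .
  then show ?thesis
  proof (rule eventually_mono, intro allI)
    fix n y assume "(SUP x. dist ((g ^^ Suc n) x) ((g ^^ n) x)) < \<epsilon>"
    moreover have "dist ((g ^^ Suc n) y) ((g ^^ n) y) \<le> (SUP x. dist ((g ^^ Suc n) x) ((g ^^ n) x))"
      by (rule cSUP_upper[OF UNIV_I bdd])
    ultimately show "dist (g ((g ^^ n) y)) ((g ^^ n) y) \<le> \<epsilon>" by simp
  qed
qed

lemma unif_asymp_regular_generator_almost_fixes:
  assumes "unif_asymp_regular g" and "g \<in> G" and "range T = gen_semigroup G" and "\<delta> > 0"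
  shows "\<exists>b. \<forall>y. dist (g (T b y)) (T b y) \<le> \<delta>"
proof -
  obtain N where "\<forall>n\<ge>N. \<forall>y. dist (g ((g ^^ n) y)) ((g ^^ n) y) \<le> \<delta>"
    using unif_asymp_regular_eventually_almost_fixed[OF assms(1,4)]
    unfolding eventually_sequentially by blast
  then have N: "\<forall>y. dist (g ((g ^^ Suc N) y)) ((g ^^ Suc N) y) \<le> \<delta>"
    by (simp del: funpow.simps)
  have "g ^^ Suc N \<in> range T"
    using assms(2,3) funpow_Suc_in_gen_semigroup gen_semigroup.base by blast
  then obtain b where "g ^^ Suc N = T b" by blast
  then show ?thesis using N by (intro exI[of _ b]) (simp del: funpow.simps)
qed

section \<open>Left reversible semigroups\<close>

lemma left_reversible_Inter_right_ideals:
  fixes D :: "'i \<Rightarrow> 's::{topological_space,semigroup_mult} set"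
  assumes "left_reversible TYPE('s)" and "finite E"
    and "\<And>i. i \<in> E \<Longrightarrow> closed (D i) \<and> right_ideal (D i)"
  shows "right_ideal (\<Inter>i\<in>E. D i)"
proof -
  have "closed (\<Inter>i\<in>E. D i) \<and> right_ideal (\<Inter>i\<in>E. D i)"
    using assms(2,3)
  proof (induction E rule: finite_induct)
    case empty
    then show ?case by (simp add: right_ideal_def)
  next
    case (insert i E)
    then have "D i \<inter> (\<Inter>i\<in>E. D i) \<noteq> {}"
      using assms(1) unfolding left_reversible_def by blast
    then show ?case using insert by (auto simp: right_ideal_def)
  qed
  then show ?thesis ..
qed

lemma left_reversible_common_almost_fixed:
  fixes T :: "'s::{topological_space,semigroup_mult} \<Rightarrow> 'm::metric_space \<Rightarrow> 'm"
  assumes "left_reversible TYPE('s)"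
    and rep: "\<And>s t. T (s * t) = T s \<circ> T t"
    and cont_orbit: "\<And>x. continuous_on UNIV (\<lambda>t. T t x)"
    and "finite Q" and cont: "\<And>g. g \<in> Q \<Longrightarrow> continuous_on UNIV g"
    and absorb: "\<And>g. g \<in> Q \<Longrightarrow> \<exists>b. \<forall>y. dist (g (T b y)) (T b y) \<le> \<epsilon>"
  shows "\<exists>t. \<forall>g\<in>Q. \<forall>y. dist (g (T t y)) (T t y) \<le> \<epsilon>"
proof -
  define D where "D g = {t. \<forall>y. dist (g (T t y)) (T t y) \<le> \<epsilon>}" for g
  have "closed (D g) \<and> right_ideal (D g)" if "g \<in> Q" for g
  proof
    show "closed (D g)" unfolding D_def
      by (intro closed_Collect_all closed_Collect_le continuous_on_dist continuous_on_const
          cont_orbit continuous_on_UNIV_compose[OF cont[OF that]])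
    show "right_ideal (D g)"
      using absorb[OF that] by (auto simp: right_ideal_def D_def rep)
  qed
  then have "right_ideal (\<Inter>g\<in>Q. D g)"
    by (intro left_reversible_Inter_right_ideals assms(1,4))
  then obtain t where "t \<in> (\<Inter>g\<in>Q. D g)" unfolding right_ideal_def by blast
  then show ?thesis by (auto simp: D_def)
qed

section \<open>Left uniformly continuous functions and invariant means\<close>

lemma LUCI:
  assumes "bounded (range f)" and "continuous_on UNIV f"
    and "\<And>s0 e. e > 0 \<Longrightarrow> \<exists>U. open U \<and> s0 \<in> U \<and> (\<forall>s\<in>U. \<forall>t. \<bar>f (s * t) - f (s0 * t)\<bar> < e)"
  shows "f \<in> LUC"
  unfolding LUC_def ltrans_def mem_Collect_eq by (intro conjI allI impI assms)

lemma LUC_bounded: "f \<in> LUC \<Longrightarrow> bounded (range f)"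
  unfolding LUC_def mem_Collect_eq by (elim conjE)

lemma LUC_continuous: "f \<in> LUC \<Longrightarrow> continuous_on UNIV f"
  unfolding LUC_def mem_Collect_eq by (elim conjE)

lemma LUC_uniformE:
  assumes "f \<in> LUC" and "e > 0"
  obtains U where "open U" and "a \<in> U" and "\<And>s t. s \<in> U \<Longrightarrow> \<bar>f (s * t) - f (a * t)\<bar> < e"
proof -
  have "\<forall>e>0. \<exists>U. open U \<and> a \<in> U \<and> (\<forall>s\<in>U. \<forall>t. \<bar>f (s * t) - f (a * t)\<bar> < e)"
    using assms(1) unfolding LUC_def ltrans_def mem_Collect_eq by (elim conjE) (rule spec)
  then obtain U where "open U" "a \<in> U" and U: "\<forall>s\<in>U. \<forall>t. \<bar>f (s * t) - f (a * t)\<bar> < e"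
    using assms(2) by auto
  then show ?thesis by (intro that) auto
qed

lemma LUC_const: "(\<lambda>_. c) \<in> LUC"
  by (rule LUCI) (simp_all, intro exI[of _ UNIV], simp)

lemma LUC_add:
  assumes f: "f \<in> LUC" and g: "g \<in> LUC"
  shows "(\<lambda>t. f t + g t) \<in> LUC"
proof (rule LUCI)
  show "bounded (range (\<lambda>t. f t + g t))"
    by (rule bounded_plus_comp[OF LUC_bounded[OF f] LUC_bounded[OF g]])
  show "continuous_on UNIV (\<lambda>t. f t + g t)"
    by (intro continuous_on_add LUC_continuous f g)
  fix s0 :: 'a and e :: real assume "e > 0"
  obtain U where "open U" "s0 \<in> U" and U: "\<And>s t. s \<in> U \<Longrightarrow> \<bar>f (s * t) - f (s0 * t)\<bar> < e/2"
    by (rule LUC_uniformE[OF f half_gt_zero[OF \<open>e > 0\<close>], where a=s0]) blast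
  obtain V where "open V" "s0 \<in> V" and V: "\<And>s t. s \<in> V \<Longrightarrow> \<bar>g (s * t) - g (s0 * t)\<bar> < e/2"
    by (rule LUC_uniformE[OF g half_gt_zero[OF \<open>e > 0\<close>], where a=s0]) blast
  have "\<bar>f (s * t) + g (s * t) - (f (s0 * t) + g (s0 * t))\<bar> < e" if "s \<in> U \<inter> V" for s t
    using U[of s t] V[of s t] that unfolding abs_less_iff by auto
  with \<open>open U\<close> \<open>open V\<close> \<open>s0 \<in> U\<close> \<open>s0 \<in> V\<close>
  show "\<exists>W. open W \<and> s0 \<in> W \<and>
      (\<forall>s\<in>W. \<forall>t. \<bar>f (s * t) + g (s * t) - (f (s0 * t) + g (s0 * t))\<bar> < e)"
    by (intro exI[of _ "U \<inter> V"]) auto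
qed

lemma LUC_scale:
  assumes f: "f \<in> LUC"
  shows "(\<lambda>t. c * f t) \<in> LUC"
proof (rule LUCI)
  show "bounded (range (\<lambda>t. c * f t))"
    using bounded_scaleR_comp[OF LUC_bounded[OF f], of c] by simp
  show "continuous_on UNIV (\<lambda>t. c * f t)"
    by (intro continuous_on_mult continuous_on_const LUC_continuous f)
  fix s0 :: 'a and e :: real assume "e > 0"
  then have "e / (\<bar>c\<bar> + 1) > 0" by simp
  then obtain U where "open U" "s0 \<in> U"
    and U: "\<And>s t. s \<in> U \<Longrightarrow> \<bar>f (s * t) - f (s0 * t)\<bar> < e / (\<bar>c\<bar> + 1)"
    by (rule LUC_uniformE[OF f, where a=s0]) blast
  have "\<bar>c * f (s * t) - c * f (s0 * t)\<bar> < e" if "s \<in> U" for s t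
  proof -
    have "\<bar>c * f (s * t) - c * f (s0 * t)\<bar> = \<bar>c\<bar> * \<bar>f (s * t) - f (s0 * t)\<bar>"
      by (simp add: abs_mult right_diff_distrib[symmetric])
    also have "\<dots> \<le> \<bar>c\<bar> * (e / (\<bar>c\<bar> + 1))"
      by (intro mult_left_mono less_imp_le[OF U[OF that]]) simp
    also have "\<dots> < e" using \<open>e > 0\<close> by (simp add: field_simps)
    finally show ?thesis .
  qed
  with \<open>open U\<close> \<open>s0 \<in> U\<close>
  show "\<exists>U. open U \<and> s0 \<in> U \<and> (\<forall>s\<in>U. \<forall>t. \<bar>c * f (s * t) - c * f (s0 * t)\<bar> < e)"
    by (intro exI[of _ U]) auto
qed

lemma LUC_sum:
  "finite P \<Longrightarrow> (\<And>i. i \<in> P \<Longrightarrow> f i \<in> LUC) \<Longrightarrow> (\<lambda>t. \<Sum>i\<in>P. f i t) \<in> LUC"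
  by (induction P rule: finite_induct) (simp_all add: LUC_const LUC_add)

lemma LUC_orbit:
  fixes T :: "'s::{topological_space,semigroup_mult} \<Rightarrow> 'm::metric_space \<Rightarrow> 'm"
    and \<phi> :: "'m \<Rightarrow> real"
  assumes compact: "compact (UNIV :: 'm set)" and cont: "continuous_on UNIV (\<lambda>(s, x). T s x)"
    and rep: "\<And>s t. T (s * t) = T s \<circ> T t" and \<phi>: "continuous_on UNIV \<phi>"
  shows "(\<lambda>t. \<phi> (T t x)) \<in> LUC"
proof (rule LUCI)
  have "bounded (range \<phi>)"
    by (rule compact_imp_bounded[OF compact_continuous_image[OF \<phi> compact]])
  then show "bounded (range (\<lambda>t. \<phi> (T t x)))" by (rule bounded_subset) auto
  show "continuous_on UNIV (\<lambda>t. \<phi> (T t x))"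
    by (rule continuous_on_UNIV_compose[OF \<phi> jointly_continuous_sections(2)[OF cont]])
  fix s0 :: 's and e :: real assume "e > 0"
  moreover have "uniformly_continuous_on UNIV \<phi>"
    by (rule compact_uniformly_continuous[OF \<phi> compact])
  ultimately obtain d where "d > 0" and d: "\<And>y y'. dist y' y < d \<Longrightarrow> dist (\<phi> y') (\<phi> y) < e"
    unfolding uniformly_continuous_on_def by blast
  have "continuous_on (UNIV \<times> UNIV) (\<lambda>(s, x). T s x)" using cont by simp
  then obtain U where "s0 \<in> U" "open U"
    and U: "\<forall>s\<in>U \<inter> UNIV. \<forall>y\<in>UNIV. dist (T s y) (T s0 y) \<le> d/2"
    by (rule continuous_on_prod_compactE[of UNIV UNIV "\<lambda>(s, x). T s x" s0,
          OF _ compact UNIV_I half_gt_zero[OF \<open>d > 0\<close>]]) auto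
  show "\<exists>U. open U \<and> s0 \<in> U \<and> (\<forall>s\<in>U. \<forall>t. \<bar>\<phi> (T (s * t) x) - \<phi> (T (s0 * t) x)\<bar> < e)"
  proof (intro exI[of _ U] conjI ballI allI)
    fix s t assume "s \<in> U"
    then have "dist (T s (T t x)) (T s0 (T t x)) \<le> d/2" using U by blast
    then have "dist (T s (T t x)) (T s0 (T t x)) < d" using \<open>d > 0\<close> by linarith
    then show "\<bar>\<phi> (T (s * t) x) - \<phi> (T (s0 * t) x)\<bar> < e"
      using d by (simp add: rep dist_real_def)
  qed fact+
qed

definition LUC_mean :: "(('s::{topological_space,semigroup_mult} \<Rightarrow> real) \<Rightarrow> real) \<Rightarrow> bool" where
  "LUC_mean \<mu> \<longleftrightarrow>
     (\<forall>f\<in>LUC. \<forall>g\<in>LUC. \<mu> (\<lambda>t. f t + g t) = \<mu> f + \<mu> g) \<and>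
     (\<forall>f\<in>LUC. \<forall>c. \<mu> (\<lambda>t. c * f t) = c * \<mu> f) \<and>
     (\<forall>f\<in>LUC. \<bar>\<mu> f\<bar> \<le> (SUP t. \<bar>f t\<bar>)) \<and>
     \<mu> (\<lambda>_. 1) = 1"

lemma left_amenableE:
  assumes "left_amenable TYPE('s)"
  obtains \<mu> :: "('s::{topological_space,semigroup_mult} \<Rightarrow> real) \<Rightarrow> real"
  where "LUC_mean \<mu>" and "\<And>f s. f \<in> LUC \<Longrightarrow> \<mu> (ltrans s f) = \<mu> f"
  using assms unfolding left_amenable_def LUC_mean_def by blast

lemma LUC_mean_add: "LUC_mean \<mu> \<Longrightarrow> f \<in> LUC \<Longrightarrow> g \<in> LUC \<Longrightarrow> \<mu> (\<lambda>t. f t + g t) = \<mu> f + \<mu> g"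
  and LUC_mean_scale: "LUC_mean \<mu> \<Longrightarrow> f \<in> LUC \<Longrightarrow> \<mu> (\<lambda>t. c * f t) = c * \<mu> f"
  and LUC_mean_norm: "LUC_mean \<mu> \<Longrightarrow> f \<in> LUC \<Longrightarrow> \<bar>\<mu> f\<bar> \<le> (SUP t. \<bar>f t\<bar>)"
  unfolding LUC_mean_def by auto

lemma LUC_mean_const: "LUC_mean \<mu> \<Longrightarrow> \<mu> (\<lambda>_. c) = c"
  using LUC_mean_scale[OF _ LUC_const, of \<mu> c 1] by (simp add: LUC_mean_def)

lemma LUC_mean_le_const:
  assumes \<mu>: "LUC_mean \<mu>" and f: "f \<in> LUC" and le: "\<And>t. f t \<le> c"
  shows "\<mu> f \<le> c"
proof -
  obtain B where B: "\<And>t. \<bar>f t\<bar> \<le> B"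
    using LUC_bounded[OF f] unfolding bounded_iff by auto
  define K where "K = (c + B) / 2"
  \<comment> \<open>the norm bound, applied to \<open>c - K - f\<close>, which takes values in \<open>[-K, K]\<close>\<close>
  define h where "h t = (c - K) + (-1) * f t" for t
  have "h \<in> LUC" unfolding h_def by (intro LUC_add LUC_const LUC_scale f)
  have "\<mu> h = \<mu> (\<lambda>_. c - K) + \<mu> (\<lambda>t. (-1) * f t)"
    unfolding h_def by (rule LUC_mean_add[OF \<mu> LUC_const LUC_scale[OF f]])
  then have \<mu>_h: "\<mu> h = (c - K) - \<mu> f"
    using LUC_mean_scale[OF \<mu> f, of "-1"] by (simp add: LUC_mean_const[OF \<mu>])
  have "\<bar>\<mu> h\<bar> \<le> (SUP t. \<bar>h t\<bar>)" by (rule LUC_mean_norm[OF \<mu> \<open>h \<in> LUC\<close>])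
  also have "\<dots> \<le> K"
  proof (rule cSUP_least)
    fix t
    have "- B \<le> f t" using B[of t] by (simp add: abs_le_iff)
    then show "\<bar>h t\<bar> \<le> K" using le[of t] by (auto simp: h_def K_def abs_le_iff field_simps)
  qed simp
  finally show ?thesis unfolding \<mu>_h by (simp add: abs_le_iff)
qed

lemma LUC_mean_ge_const:
  assumes \<mu>: "LUC_mean \<mu>" and f: "f \<in> LUC" and ge: "\<And>t. c \<le> f t"
  shows "c \<le> \<mu> f"
proof -
  have "\<mu> (\<lambda>t. (-1) * f t) \<le> -c"
    by (rule LUC_mean_le_const[OF \<mu> LUC_scale[OF f]]) (simp add: ge)
  then show ?thesis using LUC_mean_scale[OF \<mu> f, of "-1"] by simp
qed

lemma LUC_mean_sum:
  assumes "LUC_mean \<mu>"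
  shows "finite P \<Longrightarrow> (\<And>i. i \<in> P \<Longrightarrow> f i \<in> LUC) \<Longrightarrow> \<mu> (\<lambda>t. \<Sum>i\<in>P. f i t) = (\<Sum>i\<in>P. \<mu> (f i))"
  by (induction P rule: finite_induct)
     (simp_all add: LUC_mean_const[OF assms] LUC_mean_add[OF assms] LUC_sum)

lemma LUC_mean_sum_less_witness:
  assumes \<mu>: "LUC_mean \<mu>" and "finite P"
    and f: "\<And>i. i \<in> P \<Longrightarrow> f i \<in> LUC" and nonneg: "\<And>i t. i \<in> P \<Longrightarrow> 0 \<le> f i t"
    and less: "(\<Sum>i\<in>P. \<mu> (f i)) < \<epsilon>"
  shows "\<exists>t. \<forall>i\<in>P. f i t < \<epsilon>"
proof (rule ccontr)
  assume "\<nexists>t. \<forall>i\<in>P. f i t < \<epsilon>"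
  have "\<epsilon> \<le> (\<Sum>i\<in>P. f i t)" for t
  proof -
    obtain i where "i \<in> P" and "\<epsilon> \<le> f i t" using \<open>\<nexists>t. \<forall>i\<in>P. f i t < \<epsilon>\<close> by (auto simp: not_less)
    moreover have "f i t \<le> (\<Sum>i\<in>P. f i t)"
      using \<open>i \<in> P\<close> nonneg \<open>finite P\<close> by (intro member_le_sum) auto
    ultimately show ?thesis by linarith
  qed
  then have "\<epsilon> \<le> \<mu> (\<lambda>t. \<Sum>i\<in>P. f i t)"
    by (intro LUC_mean_ge_const[OF \<mu> LUC_sum[OF \<open>finite P\<close> f]])
  with less show False by (simp add: LUC_mean_sum[OF \<mu> \<open>finite P\<close> f])
qed

lemma left_amenable_common_almost_fixed:
  fixes T :: "'s::{topological_space,semigroup_mult} \<Rightarrow> 'm::metric_space \<Rightarrow> 'm"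
  assumes "left_amenable TYPE('s)" and compact: "compact (UNIV :: 'm set)"
    and cont: "continuous_on UNIV (\<lambda>(s, x). T s x)" and rep: "\<And>s t. T (s * t) = T s \<circ> T t"
    and "finite P" and cont_P: "\<And>g x. (g, x) \<in> P \<Longrightarrow> continuous_on UNIV g"
    and absorb: "\<And>g x \<delta>. (g, x) \<in> P \<Longrightarrow> \<delta> > 0 \<Longrightarrow> \<exists>b. \<forall>y. dist (g (T b y)) (T b y) \<le> \<delta>"
    and "\<epsilon> > 0"
  shows "\<exists>t. \<forall>(g, x)\<in>P. dist (g (T t x)) (T t x) \<le> \<epsilon>"
proof -
  obtain \<mu> :: "('s \<Rightarrow> real) \<Rightarrow> real"
    where \<mu>: "LUC_mean \<mu>" and invariant: "\<And>f s. f \<in> LUC \<Longrightarrow> \<mu> (ltrans s f) = \<mu> f"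
    using left_amenableE[OF assms(1)] by blast
  define defect where "defect = (\<lambda>(g, x) t. dist (g (T t x)) (T t x))"
  define \<delta> where "\<delta> = \<epsilon> / (card P + 1)"
  have "\<delta> > 0" using \<open>\<epsilon> > 0\<close> by (simp add: \<delta>_def)
  have orbit_LUC: "(\<lambda>t. dist (h (T t x)) (k (T t x))) \<in> LUC"
    if "continuous_on UNIV h" and "continuous_on UNIV k" for h k x
    using that by (intro LUC_orbit[OF compact cont rep] continuous_on_dist)
  have defect_LUC: "defect p \<in> LUC" if "p \<in> P" for p
  proof -
    obtain g x where p: "p = (g, x)" by (cases p)
    show ?thesis
      unfolding p defect_def prod.case
      by (rule orbit_LUC[OF cont_P[OF that[unfolded p]] continuous_on_id])
  qed
  have "\<mu> (defect p) \<le> \<delta>" if pP: "p \<in> P" for p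
  proof -
    obtain g x where p: "p = (g, x)" by (cases p)
    obtain b where b: "\<forall>y. dist (g (T b y)) (T b y) \<le> \<delta>"
      using absorb[OF pP[unfolded p] \<open>\<delta> > 0\<close>] by blast
    \<comment> \<open>by invariance, the defect may be measured along the orbit shifted by \<open>b\<close>\<close>
    have shifted: "ltrans b (defect p) = (\<lambda>t. dist (g (T b (T t x))) (T b (T t x)))"
      by (simp add: ltrans_def defect_def p rep)
    have cont_Tb: "continuous_on UNIV (T b)" by (rule jointly_continuous_sections(1)[OF cont])
    have "ltrans b (defect p) \<in> LUC"
      unfolding shifted
      by (rule orbit_LUC[OF continuous_on_UNIV_compose[OF cont_P[OF pP[unfolded p]] cont_Tb]
            cont_Tb])
    then have "\<mu> (ltrans b (defect p)) \<le> \<delta>"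
      by (rule LUC_mean_le_const[OF \<mu>]) (simp add: shifted b)
    then show ?thesis using invariant defect_LUC[OF pP] by simp
  qed
  then have "(\<Sum>p\<in>P. \<mu> (defect p)) \<le> card P * \<delta>"
    using sum_bounded_above[of P "\<lambda>p. \<mu> (defect p)" \<delta>] by simp
  also have "\<dots> < \<epsilon>" using \<open>\<epsilon> > 0\<close> by (simp add: \<delta>_def field_simps)
  finally have "(\<Sum>p\<in>P. \<mu> (defect p)) < \<epsilon>" .
  moreover have "0 \<le> defect p t" if "p \<in> P" for p t by (cases p) (simp add: defect_def)
  ultimately obtain t where "\<forall>p\<in>P. defect p t < \<epsilon>"
    using LUC_mean_sum_less_witness[where f=defect, OF \<mu> \<open>finite P\<close> defect_LUC] by blast
  then show ?thesis by (intro exI[of _ t]) (auto simp: defect_def intro: less_imp_le)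
qed

section \<open>The retraction onto the common fixed points\<close>

lemma common_almost_fixed_point:
  fixes T :: "'s::{topological_space,semigroup_mult} \<Rightarrow> 'm::metric_space \<Rightarrow> 'm"
    and G :: "('m \<Rightarrow> 'm) set"
  assumes "left_reversible TYPE('s) \<or> left_amenable TYPE('s)"
    and compact: "compact (UNIV :: 'm set)"
    and cont: "continuous_on UNIV (\<lambda>(s, x). T s x)" and rep: "\<And>s t. T (s * t) = T s \<circ> T t"
    and cont_G: "\<And>g. g \<in> G \<Longrightarrow> continuous_on UNIV g"
    and absorb: "\<And>g \<delta>. g \<in> G \<Longrightarrow> \<delta> > 0 \<Longrightarrow> \<exists>b. \<forall>y. dist (g (T b y)) (T b y) \<le> \<delta>"
    and "finite P" and "P \<subseteq> G \<times> UNIV" and "\<epsilon> > 0"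
  shows "\<exists>f\<in>range T. \<forall>(g, x)\<in>P. dist (g (f x)) (f x) \<le> \<epsilon>"
proof -
  have "\<exists>t. \<forall>(g, x)\<in>P. dist (g (T t x)) (T t x) \<le> \<epsilon>"
    using assms(1)
  proof
    assume "left_reversible TYPE('s)"
    moreover have "fst ` P \<subseteq> G" using \<open>P \<subseteq> G \<times> UNIV\<close> by auto
    ultimately have "\<exists>t. \<forall>g\<in>fst ` P. \<forall>y. dist (g (T t y)) (T t y) \<le> \<epsilon>"
      using \<open>finite P\<close> cont_G absorb[OF _ \<open>\<epsilon> > 0\<close>]
      by (intro left_reversible_common_almost_fixed[OF _ rep jointly_continuous_sections(2)[OF cont]])
         auto
    then show ?thesis by fastforce
  next
    assume "left_amenable TYPE('s)"
    then show ?thesis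
      using \<open>finite P\<close> \<open>P \<subseteq> G \<times> UNIV\<close> \<open>\<epsilon> > 0\<close>
      by (intro left_amenable_common_almost_fixed compact cont rep) (auto intro: cont_G absorb)
  qed
  then show ?thesis by blast
qed

theorem theorem4p9:
  fixes T :: "'s::{t2_space,semigroup_mult} \<Rightarrow> 'm::metric_space \<Rightarrow> 'm"
  assumes "compact (UNIV :: 'm set)"
    and "semitopological_semigroup TYPE('s)"
    and "left_reversible TYPE('s) \<or> left_amenable TYPE('s)"
    and "\<And>s t. T (s * t) = T s \<circ> T t"
    and "continuous_on UNIV (\<lambda>(s, x). T s x)"
    and "\<exists>G. (\<forall>g\<in>G. unif_asymp_regular g) \<and> range T = gen_semigroup G"
  shows "\<exists>r \<in> closure (range T). r \<circ> r = r \<and> range r = {x. \<forall>s. T s x = x}"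
proof -
  obtain G where uar: "\<forall>g\<in>G. unif_asymp_regular g" and gen: "range T = gen_semigroup G"
    using assms(6) by blast
  have "G \<subseteq> range T" using gen gen_semigroup.base by blast
  then have cont_G: "continuous_on UNIV g" if "g \<in> G" for g
    using that jointly_continuous_sections(1)[OF assms(5)] by blast
  have absorb: "\<exists>b. \<forall>y. dist (g (T b y)) (T b y) \<le> \<delta>" if "g \<in> G" and "\<delta> > 0" for g \<delta>
    by (rule unif_asymp_regular_generator_almost_fixes[OF bspec[OF uar that(1)] that(1) gen that(2)])
  have almost_fixed: "\<exists>f\<in>range T. \<forall>(g, x)\<in>P. dist (g (f x)) (f x) \<le> \<epsilon>"
    if "finite P" and "P \<subseteq> G \<times> UNIV" and "\<epsilon> > 0" for P \<epsilon>
    by (rule common_almost_fixed_point[OF assms(3,1,5,4) cont_G absorb that])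
  obtain r where r: "r \<in> closure (range T)" and fixes_G: "\<And>g x. g \<in> G \<Longrightarrow> g (r x) = r x"
    using common_fixed_point_in_closure[OF assms(1) cont_G almost_fixed] by blast
  have "f (r x) = r x" if "f \<in> range T" for f x
    using gen_semigroup_common_fixed_point[of f G] that gen fixes_G by blast
  then show ?thesis
    using retraction_onto_common_fixed_points[OF r] r by auto
qed

end
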